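(* For $u\in\mathbb{Z}_n$ and $j\in\mathbb{Z}_n$ set $E_{u,j}=\sum_{v=0}^{n/d-1}e_{j+vd}E_u$. Then for $j,\ell\in\{0,\dots,d-1\}$ we have $E_{u,j}E_{u,\ell}=\delta_{j\ell}E_{u,j}$, $\sum_{j=0}^{d-1}E_{u,j}=E_u$, and $E_{u,j}=E_{u,j'}$ if and only if $j\equiv j'\pmod d$. Moreover, in $\Gamma_u=\mathcal{D}(\Lambda_{n,d})E_u$: $$GE_{u,j}=q^{u+j}E_{u,j}=E_{u,j}G,\qquad XE_{u,j}=E_{u,j-1}X,$$ and $\gamma_\ell^mE_{u,j}=E_{u,j+m}\gamma_\ell^m$ if $\ell\equiv j\pmod d$, while $\gamma_\ell^mE_{u,j}=0$ otherwise.
   Context: $k$ is an algebraically closed field; $n,d$ integers with $d\geqslant2$, $d\mid n$, $\mathrm{char}\,k\nmid n$; $q$ a primitive $d$-th root of unity. $\Lambda_{n,d}$ is the path algebra of the cyclic quiver with vertices $e_i$ and arrows $a_i:e_i\to e_{i+1}$ ($i\in\mathbb{Z}_n$) modulo all paths of length $d$; $\gamma_i^m=a_{i+m-1}\cdots a_i$, $\gamma_i^0=e_i$. $\mathcal{D}(\Lambda_{n,d})$ is the Drinfel'd double of the Hopf algebra $\Lambda_{n,d}$; concretely it has basis $G^iX^j\gamma_\ell^m$ ($i,\ell\in\mathbb{Z}_n$, $0\leqslant j,m\leqslant d-1$) and is generated by $G,X,e_i,a_i$ with relations $G^n=1$, $X^d=0$, $GX=q^{-1}XG$, products of paths as in $\Lambda_{n,d}$,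 $\gamma_\ell^mG=q^{-m}G\gamma_\ell^m$, $\gamma_\ell^mX=q^{-m}X\gamma_{\ell+1}^m-q^{-m}(m)_q\gamma_{\ell+1}^{m-1}+q^{\ell+1-m}(m)_qG\gamma_{\ell+1}^{m-1}$, with $(m)_q=1+q+\cdots+q^{m-1}$. $E_u=\frac1n\sum_{i,j\in\mathbb{Z}_n}q^{-i(u+j)}G^ie_j$; these are central orthogonal idempotents summing to $1$. *)

theory Defs
  imports "HOL-Computational_Algebra.Polynomial"
begin

text \<open>Concrete model of the Drinfel'd double D(Lambda_{n,d}): a ring 'a together with
  a central embedding emb of the ground field 'k (so 'a is a 'k-algebra), and elements
  G, X, e_i, a_i (indices in Z_n represented by integers, functions periodic mod n)
  satisfying the defining relations, such that the monomials G^i X^j gamma_l^m form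
  a 'k-basis.\<close>

text \<open>q to an integer power, for q a d-th root of unity.\<close>
definition qp :: "nat \<Rightarrow> 'k::field \<Rightarrow> int \<Rightarrow> 'k" where
  "qp d q z = q ^ nat (z mod int d)"

definition qint :: "'k::field \<Rightarrow> nat \<Rightarrow> 'k" where
  "qint q m = (\<Sum>t<m. q ^ t)"

fun gam :: "(int \<Rightarrow> 'a::ring_1) \<Rightarrow> (int \<Rightarrow> 'a) \<Rightarrow> int \<Rightarrow> nat \<Rightarrow> 'a" where
  "gam a e l 0 = e l"
| "gam a e l (Suc m) = a (l + int m) * gam a e l m"

definition is_DD :: "nat \<Rightarrow> nat \<Rightarrow> 'k::field \<Rightarrow> ('k \<Rightarrow> 'a::ring_1) \<Rightarrow> 'a \<Rightarrow> 'a
    \<Rightarrow> (int \<Rightarrow> 'a) \<Rightarrow> (int \<Rightarrow> 'a) \<Rightarrow> bool" where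
  "is_DD n d q emb G X e a \<longleftrightarrow>
     \<comment> \<open>emb makes 'a a 'k-algebra\<close>
     emb 0 = 0 \<and> emb 1 = 1 \<and> (\<forall>x y. emb (x + y) = emb x + emb y)
     \<and> (\<forall>x y. emb (x * y) = emb x * emb y) \<and> (\<forall>c z. emb c * z = z * emb c)
     \<comment> \<open>indices in Z_n\<close>
     \<and> (\<forall>i. e (i + int n) = e i) \<and> (\<forall>i. a (i + int n) = a i)
     \<comment> \<open>path algebra of the cyclic quiver modulo paths of length d\<close>
     \<and> (\<forall>i j. e i * e j = (if i mod int n = j mod int n then e i else 0))
     \<and> (\<Sum>i<n. e (int i)) = 1
     \<and> (\<forall>i. a i = e (i + 1) * a i * e i)
     \<and> (\<forall>i. gam a e i d = 0)
     \<comment> \<open>relations involving G and X\<close>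
     \<and> G ^ n = 1 \<and> X ^ d = 0
     \<and> G * X = emb (qp d q (-1)) * X * G
     \<and> (\<forall>l m. m < d \<longrightarrow> gam a e l m * G = emb (qp d q (- int m)) * G * gam a e l m)
     \<and> (\<forall>l m. m < d \<longrightarrow> gam a e l m * X =
           emb (qp d q (- int m)) * X * gam a e (l + 1) m
         - emb (qp d q (- int m) * qint q m) * gam a e (l + 1) (m - 1)
         + emb (qp d q (l + 1 - int m) * qint q m) * G * gam a e (l + 1) (m - 1))
     \<comment> \<open>the monomials G^i X^j gamma_l^m (i,l < n, j,m < d) form a 'k-basis\<close>
     \<and> (let I = {0..<n} \<times> {0..<d} \<times> {0..<n} \<times> {0..<d};
            mono = (\<lambda>(i, j, l, m). G ^ i * X ^ j * gam a e (int l) m)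
        in (\<forall>z. \<exists>c. z = (\<Sum>t\<in>I. emb (c t) * mono t))
         \<and> (\<forall>c. (\<Sum>t\<in>I. emb (c t) * mono t) = 0 \<longrightarrow> (\<forall>t\<in>I. c t = 0)))"

definition Eid :: "nat \<Rightarrow> nat \<Rightarrow> 'k::field \<Rightarrow> ('k \<Rightarrow> 'a::ring_1) \<Rightarrow> 'a
    \<Rightarrow> (int \<Rightarrow> 'a) \<Rightarrow> int \<Rightarrow> 'a" where
  "Eid n d q emb G e u =
     (\<Sum>i<n. \<Sum>j<n. emb (inverse (of_nat n) * qp d q (- (int i * (u + int j)))) * G ^ i * e (int j))"

definition Eidj :: "nat \<Rightarrow> nat \<Rightarrow> 'k::field \<Rightarrow> ('k \<Rightarrow> 'a::ring_1) \<Rightarrow> 'a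
    \<Rightarrow> (int \<Rightarrow> 'a) \<Rightarrow> int \<Rightarrow> int \<Rightarrow> 'a" where
  "Eidj n d q emb G e u j = (\<Sum>v<n div d. e (j + int v * int d) * Eid n d q emb G e u)"

end

theory Submission
  imports Defs
begin

(* Since G^n = 1 and n is invertible, P_c = (1/n) sum_i q^(-ic) G^i is an idempotent with
   G P_c = q^c P_c, and e_k E_u = P_(u+k) e_k.  Any Y with Y G = q^(-s) G Y satisfies
   Y P_c = P_(c+s) Y; for Y = e_k, X, gamma_l^m (s = 0, -1, m) this yields the commutation rules
   of the elements e_k E_u, which are orthogonal idempotents depending only on k mod n.
   E_(u,j) is the sum of those with k = j mod d, so all identities hold termwise.  Finally
   e_k E_u is nonzero because the monomials G^i e_k are linearly independent, which gives the
   "only if" part of E_(u,j) = E_(u,j') <-> j = j' mod d. *)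

lemma periodic_add_mult:
  fixes g :: "int \<Rightarrow> 'b"
  assumes per: "\<And>w. g (w + p) = g w"
  shows "g (w + k * p) = g w"
proof (induction k rule: int_induct[where k = 0])
  case base
  then show ?case by simp
next
  case (step1 i)
  have "g (w + (i + 1) * p) = g (w + i * p + p)" by (simp add: algebra_simps)
  then show ?case using per step1 by simp
next
  case (step2 i)
  have "g (w + i * p) = g (w + (i - 1) * p + p)" by (simp add: algebra_simps)
  then show ?case using per step2 by simp
qed

lemma periodic_mod_eq:
  fixes g :: "int \<Rightarrow> 'b"
  assumes per: "\<And>w. g (w + p) = g w" and "w mod p = w' mod p"
  shows "g w = g w'"
proof -
  have "g x = g (x mod p)" for x
    using periodic_add_mult[of g p "x mod p" "x div p", OF per] by simp
  then show ?thesis using assms(2) by metis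
qed

lemma sum_lessThan_rotate:
  fixes h :: "nat \<Rightarrow> 'b::cancel_comm_monoid_add"
  assumes "h N = h 0"
  shows "(\<Sum>i<N. h (Suc i)) = (\<Sum>i<N. h i)"
  using sum.lessThan_Suc_shift[of h N] sum.lessThan_Suc[of h N] assms
  by (simp add: add.commute)

lemma sum_periodic_shift:
  fixes g :: "int \<Rightarrow> 'b::cancel_comm_monoid_add"
  assumes per: "\<And>w. g (w + int N) = g w"
  shows "(\<Sum>v<N. g (int v + t)) = (\<Sum>v<N. g (int v))"
proof (induction t rule: int_induct[where k = 0])
  case base
  then show ?case by simp
next
  case (step1 i)
  have "(\<Sum>v<N. g (int v + (i + 1))) = (\<Sum>v<N. g (int (Suc v) + i))"
    by (simp add: algebra_simps)
  also have "\<dots> = (\<Sum>v<N. g (int v + i))"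
    by (rule sum_lessThan_rotate) (use per[of i] in \<open>simp add: add_ac\<close>)
  finally show ?case using step1 by simp
next
  case (step2 i)
  have "(\<Sum>v<N. g (int v + i)) = (\<Sum>v<N. g (int (Suc v) + (i - 1)))"
    by (simp add: algebra_simps)
  also have "\<dots> = (\<Sum>v<N. g (int v + (i - 1)))"
    by (rule sum_lessThan_rotate) (use per[of "i - 1"] in \<open>simp add: add_ac\<close>)
  finally show ?case using step2 by simp
qed

lemma add_mult_mod_eq_iff:
  fixes j l D :: int
  assumes "0 \<le> j" "j < D" "0 \<le> l" "l < D" "v < N" "v' < N"
  shows "(j + int v * D) mod (int N * D) = (l + int v' * D) mod (int N * D) \<longleftrightarrow> j = l \<and> v = v'"
proof
  have bound: "0 \<le> x + int w * D \<and> x + int w * D < int N * D" if "0 \<le> x" "x < D" "w < N" for x w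
  proof -
    have "(int w + 1) * D \<le> int N * D" using that by (intro mult_right_mono) auto
    then show ?thesis using that by (simp add: algebra_simps)
  qed
  assume "(j + int v * D) mod (int N * D) = (l + int v' * D) mod (int N * D)"
  then have eq: "j + int v * D = l + int v' * D"
    using bound[of j v] bound[of l v'] assms by (simp add: mod_pos_pos_trivial)
  then have "(j + int v * D) mod D = (l + int v' * D) mod D" by simp
  then have "j = l" using assms by (simp add: mod_pos_pos_trivial)
  with eq show "j = l \<and> v = v'" using assms by simp
qed simp

lemma qp_eq_power_int:
  fixes q :: "'k::field"
  assumes "0 < d" and "q ^ d = 1"
  shows "qp d q z = q powi z"
proof -
  have "q \<noteq> 0" using assms by (cases d) auto
  have r: "z mod int d = int (nat (z mod int d))" using assms by simp
  have "q powi z = q powi (int d * (z div int d) + z mod int d)" by simp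
  also have "\<dots> = (q powi int d) powi (z div int d) * q powi (z mod int d)"
    by (simp only: power_int_add[OF disjI1, OF \<open>q \<noteq> 0\<close>] power_int_mult)
  also have "\<dots> = q powi (z mod int d)" using assms by simp
  also have "\<dots> = q ^ nat (z mod int d)" by (metis r power_int_of_nat)
  finally show ?thesis by (simp add: qp_def)
qed

lemma power_int_root_of_unity_cong:
  fixes q :: "'k::field"
  assumes "0 < d" and "q ^ d = 1" and "z mod int d = w mod int d"
  shows "q powi z = q powi w"
  using assms by (simp add: qp_eq_power_int[symmetric] qp_def)

lemma G_power_e_independent_if_basis:
  fixes emb :: "'k::field \<Rightarrow> 'a::ring_1"
  assumes emb_0: "emb 0 = 0" and "0 < d" and "K < n" and "i < n"
    and basis_independent: "\<forall>c. (\<Sum>t\<in>{0..<n} \<times> {0..<d} \<times> {0..<n} \<times> {0..<d}.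
            emb (c t) * (case t of (i, j, l, m) \<Rightarrow> G ^ i * X ^ j * gam a e (int l) m)) = 0
          \<longrightarrow> (\<forall>t\<in>{0..<n} \<times> {0..<d} \<times> {0..<n} \<times> {0..<d}. c t = 0)"
    and sum_zero: "(\<Sum>i<n. emb (c i) * G ^ i * e (int K)) = 0"
  shows "c i = 0"
proof -
  define C where "C t = (case t of (i, j, l, m) \<Rightarrow> if j = 0 \<and> l = K \<and> m = 0 then c i else 0)"
    for t :: "nat \<times> nat \<times> nat \<times> nat"
  \<comment> \<open>conditions nested innermost summation variable first, so that simp collapses one sum at a time\<close>
  let ?f = "\<lambda>i j l m. if m = 0 then if l = K then if j = 0
             then emb (c i) * (G ^ i * X ^ j * gam a e (int l) m) else 0 else 0 else 0"
  have "(\<Sum>t\<in>{0..<n} \<times> {0..<d} \<times> {0..<n} \<times> {0..<d}.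
            emb (C t) * (case t of (i, j, l, m) \<Rightarrow> G ^ i * X ^ j * gam a e (int l) m))
      = (\<Sum>(i, j, l, m)\<in>{0..<n} \<times> {0..<d} \<times> {0..<n} \<times> {0..<d}. ?f i j l m)"
    by (rule sum.cong) (auto simp: C_def emb_0)
  also have "\<dots> = (\<Sum>i<n. \<Sum>j<d. \<Sum>l<n. \<Sum>m<d. ?f i j l m)"
    by (simp only: sum.cartesian_product atLeast0LessThan)
  also have "\<dots> = (\<Sum>i<n. emb (c i) * G ^ i * e (int K))"
    using assms by (simp add: mult.assoc)
  finally have "\<forall>t\<in>{0..<n} \<times> {0..<d} \<times> {0..<n} \<times> {0..<d}. C t = 0"
    using basis_independent sum_zero by auto
  then have "C (i, 0, K, 0) = 0" using assms by simp
  then show ?thesis by (simp add: C_def)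
qed

locale drinfeld_double =
  fixes n d :: nat and q :: "'k::field" and emb :: "'k \<Rightarrow> 'a::ring_1"
    and G X :: 'a and e a :: "int \<Rightarrow> 'a"
  assumes d_pos: "0 < d" and d_dvd_n: "d dvd n" and n_nonzero: "of_nat n \<noteq> (0::'k)"
    and q_root: "q ^ d = 1"
    and emb_0: "emb 0 = 0" and emb_1: "emb 1 = 1"
    and emb_add: "\<And>x y. emb (x + y) = emb x + emb y"
    and emb_mult: "\<And>x y. emb (x * y) = emb x * emb y"
    and emb_commute: "\<And>c z. emb c * z = z * emb c"
    and e_periodic: "\<And>i. e (i + int n) = e i"
    and e_mult: "\<And>i j. e i * e j = (if i mod int n = j mod int n then e i else 0)"
    and a_e: "\<And>i. a i = e (i + 1) * a i * e i"
    and G_power_n: "G ^ n = 1"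
    and G_X: "G * X = emb (qp d q (-1)) * X * G"
    and gam_G: "\<And>l m. m < d \<Longrightarrow> gam a e l m * G = emb (qp d q (- int m)) * G * gam a e l m"
    and e_X: "\<And>l. e l * X = X * e (l + 1)"
    and G_power_e_independent:
      "\<And>c K i. K < n \<Longrightarrow> (\<Sum>i<n. emb (c i) * G ^ i * e (int K)) = 0 \<Longrightarrow> i < n \<Longrightarrow> c i = 0"
begin

lemma q_nonzero: "q \<noteq> 0"
  using d_pos q_root by (cases d) auto

lemma n_pos: "0 < n"
  using n_nonzero by (cases n) auto

lemma qp_eq [simp]: "qp d q z = q powi z"
  by (rule qp_eq_power_int[OF d_pos q_root])

lemma power_int_q_cong: "z mod int d = w mod int d \<Longrightarrow> q powi z = q powi w"
  by (rule power_int_root_of_unity_cong[OF d_pos q_root])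

lemma power_int_q_add: "q powi (z + w) = q powi z * q powi w"
  by (simp add: power_int_add q_nonzero)

lemma mod_d_if_mod_n: "k mod int n = k' mod int n \<Longrightarrow> k mod int d = k' mod int d"
  using mod_mod_cancel[of "int d" "int n"] d_dvd_n by (metis of_nat_dvd_iff)

lemma emb_of_nat: "emb (of_nat k) = of_nat k"
  by (induct k) (simp_all add: emb_0 emb_1 emb_add)

lemma mult_emb_left_commute: "z * (emb c * w) = emb c * (z * w)"
  by (simp only: mult.assoc[symmetric] emb_commute[of c z, symmetric])

lemma G_power_twist:
  assumes "Y * G = emb x * G * Y"
  shows "Y * G ^ i = emb (x ^ i) * G ^ i * Y"
proof (induction i)
  case 0
  show ?case by (simp add: emb_1)
next
  case (Suc i)
  have "Y * G ^ Suc i = (Y * G ^ i) * G"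
    by (simp only: power_Suc2 mult.assoc)
  also have "\<dots> = emb (x ^ i) * G ^ i * (Y * G)"
    by (simp add: Suc.IH mult.assoc)
  also have "\<dots> = emb (x ^ i) * (G ^ i * (emb x * (G * Y)))"
    by (simp only: assms mult.assoc)
  also have "\<dots> = emb (x ^ i) * (emb x * (G ^ i * G * Y))"
    by (simp only: mult_emb_left_commute[of "G ^ i"] mult.assoc)
  also have "\<dots> = emb (x ^ Suc i) * G ^ Suc i * Y"
    by (simp only: emb_mult power_Suc2 mult.assoc)
  finally show ?case .
qed

definition Gproj :: "int \<Rightarrow> 'a" where
  "Gproj c = (\<Sum>i<n. emb (inverse (of_nat n) * q powi (- (int i * c))) * G ^ i)"

lemma Gproj_cong:
  assumes "c mod int d = c' mod int d"
  shows "Gproj c = Gproj c'"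
proof -
  have "(- (int i * c)) mod int d = (- (int i * c')) mod int d" for i
    using assms by (metis mod_minus_cong mod_mult_right_eq)
  then have "q powi (- (int i * c)) = q powi (- (int i * c'))" for i
    by (rule power_int_q_cong)
  then show ?thesis unfolding Gproj_def by simp
qed

lemma Gproj_twist:
  assumes "Y * G = emb (q powi (- s)) * G * Y"
  shows "Y * Gproj c = Gproj (c + s) * Y"
proof -
  have coeff: "inverse (of_nat n) * q powi (- (int i * c)) * (q powi (- s)) ^ i
      = inverse (of_nat n) * q powi (- (int i * (c + s)))" for i
  proof -
    have "(q powi (- s)) ^ i = q powi (- s * int i)"
      by (simp only: power_int_mult power_int_of_nat)
    then show ?thesis by (simp add: mult.assoc power_int_q_add[symmetric] algebra_simps)
  qed
  have "Y * Gproj c = (\<Sum>i<n. emb (inverse (of_nat n) * q powi (- (int i * c))) * (Y * G ^ i))"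
    unfolding Gproj_def by (simp add: sum_distrib_left mult_emb_left_commute[of Y])
  also have "\<dots> = (\<Sum>i<n. emb (inverse (of_nat n) * q powi (- (int i * (c + s)))) * G ^ i * Y)"
    by (rule sum.cong) (simp_all add: G_power_twist[OF assms] emb_mult coeff[symmetric] mult.assoc)
  also have "\<dots> = Gproj (c + s) * Y"
    unfolding Gproj_def by (simp add: sum_distrib_right)
  finally show ?thesis .
qed

lemma G_Gproj: "G * Gproj c = emb (q powi c) * Gproj c"
proof -
  let ?h = "\<lambda>i. emb (q powi c * (inverse (of_nat n) * q powi (- (int i * c)))) * G ^ i"
  have "q powi (- (int n * c)) = q powi 0"
    by (rule power_int_q_cong) (use d_dvd_n in auto)
  then have period: "?h n = ?h 0" by (simp add: G_power_n)
  have "emb (q powi c) * Gproj c = (\<Sum>i<n. ?h i)"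
    unfolding Gproj_def by (simp add: sum_distrib_left emb_mult mult.assoc)
  also have "\<dots> = (\<Sum>i<n. ?h (Suc i))"
    by (rule sum_lessThan_rotate[symmetric]) (rule period)
  also have "\<dots> = (\<Sum>i<n. G * (emb (inverse (of_nat n) * q powi (- (int i * c))) * G ^ i))"
  proof (rule sum.cong)
    fix i
    have "q powi c * q powi (- (int (Suc i) * c)) = q powi (- (int i * c))"
      by (simp add: power_int_q_add[symmetric] algebra_simps)
    then show "?h (Suc i) = G * (emb (inverse (of_nat n) * q powi (- (int i * c))) * G ^ i)"
      by (simp add: mult_emb_left_commute[of G] mult.left_commute)
  qed simp
  also have "\<dots> = G * Gproj c"
    unfolding Gproj_def by (simp add: sum_distrib_left)
  finally show ?thesis by simp
qed

lemma G_power_Gproj: "G ^ i * Gproj c = emb ((q powi c) ^ i) * Gproj c"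
proof (induction i)
  case 0
  show ?case by (simp add: emb_1)
next
  case (Suc i)
  have "G ^ Suc i * Gproj c = G * (emb ((q powi c) ^ i) * Gproj c)"
    by (simp add: Suc.IH mult.assoc)
  also have "\<dots> = emb ((q powi c) ^ i) * emb (q powi c) * Gproj c"
    by (simp only: mult_emb_left_commute[of G] G_Gproj mult.assoc)
  also have "\<dots> = emb ((q powi c) ^ Suc i) * Gproj c"
    by (simp only: emb_mult power_Suc2)
  finally show ?case .
qed

lemma Gproj_idem: "Gproj c * Gproj c = Gproj c"
proof -
  have "Gproj c * Gproj c
      = (\<Sum>i<n. emb (inverse (of_nat n) * q powi (- (int i * c))) * (G ^ i * Gproj c))"
    unfolding Gproj_def[of c] by (simp add: sum_distrib_right mult.assoc)
  also have "\<dots> = (\<Sum>i<n. emb (inverse (of_nat n)) * Gproj c)"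
  proof (rule sum.cong)
    fix i
    have "q powi (- (int i * c)) * (q powi c) ^ i = q powi (- (int i * c)) * q powi (c * int i)"
      by (simp only: power_int_mult power_int_of_nat)
    also have "\<dots> = q powi 0"
      by (simp only: power_int_q_add[symmetric]) (simp add: algebra_simps)
    finally have "inverse (of_nat n) * q powi (- (int i * c)) * (q powi c) ^ i = inverse (of_nat n)"
      by (simp add: mult.assoc)
    then show "emb (inverse (of_nat n) * q powi (- (int i * c))) * (G ^ i * Gproj c)
        = emb (inverse (of_nat n)) * Gproj c"
      by (simp only: G_power_Gproj mult.assoc[symmetric] emb_mult[symmetric])
  qed simp
  also have "\<dots> = emb (of_nat n * inverse (of_nat n)) * Gproj c"
    by (simp add: emb_mult emb_of_nat mult.assoc)
  also have "\<dots> = Gproj c"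
    using n_nonzero by (simp add: emb_1)
  finally show ?thesis .
qed

lemma Gproj_G: "Gproj c * G = G * Gproj c"
  using Gproj_twist[of G 0 c] by (simp add: emb_1)

lemma e_G: "e k * G = G * e k"
  using gam_G[where l = k and m = 0] d_pos by (simp add: emb_1)

lemma e_Gproj: "e k * Gproj c = Gproj c * e k"
  using Gproj_twist[of "e k" 0 c] e_G by (simp add: emb_1)

lemma X_G: "X * G = emb q * G * X"
proof -
  have "emb q * G * X = emb q * emb (q powi (-1)) * X * G"
    using G_X by (simp add: mult.assoc)
  also have "\<dots> = emb (q * q powi (-1)) * X * G"
    by (simp only: emb_mult)
  also have "q * q powi (-1) = 1"
    using q_nonzero by (simp add: power_int_minus)
  finally show ?thesis by (simp add: emb_1)
qed

lemma X_Gproj: "X * Gproj c = Gproj (c - 1) * X"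
  using Gproj_twist[of X "-1" c] X_G by simp

lemma gam_Gproj: "m < d \<Longrightarrow> gam a e l m * Gproj c = Gproj (c + int m) * gam a e l m"
  using Gproj_twist[of "gam a e l m" "int m" c] gam_G by simp

lemma e_congruent: "i mod int n = j mod int n \<Longrightarrow> e i = e j"
  using e_periodic by (rule periodic_mod_eq)

lemma e_a: "e (i + 1) * a i = a i"
proof -
  have "e (i + 1) * a i = (e (i + 1) * e (i + 1)) * a i * e i"
    by (subst a_e) (simp only: mult.assoc)
  then show ?thesis by (simp add: e_mult flip: a_e)
qed

lemma gam_e_right: "gam a e l m * e l = gam a e l m"
  by (induct m) (simp_all add: e_mult mult.assoc)

lemma e_gam_left: "e (l + int m) * gam a e l m = gam a e l m"
proof (induction m)
  case 0
  show ?case by (simp add: e_mult)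
next
  case (Suc m)
  have "l + int (Suc m) = l + int m + 1" by simp
  then show ?case
    by (simp only: gam.simps mult.assoc[symmetric] e_a)
qed

lemma gam_mult_e: "gam a e l m * e k = (if k mod int n = l mod int n then gam a e l m else 0)"
proof -
  have "gam a e l m * e k = gam a e l m * (e l * e k)"
    by (simp add: gam_e_right flip: mult.assoc)
  then show ?thesis by (auto simp: e_mult gam_e_right)
qed

lemma e_mult_gam_eq_0:
  assumes "k mod int n \<noteq> (l + int m) mod int n"
  shows "e k * gam a e l m = 0"
proof -
  have "e k * gam a e l m = (e k * e (l + int m)) * gam a e l m"
    by (simp add: e_gam_left mult.assoc)
  then show ?thesis using assms by (simp add: e_mult)
qed

definition eEid :: "int \<Rightarrow> int \<Rightarrow> 'a" where
  "eEid u k = e k * Eid n d q emb G e u"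

lemma Eid_eq_sum_Gproj: "Eid n d q emb G e u = (\<Sum>j<n. Gproj (u + int j) * e (int j))"
  unfolding Eid_def Gproj_def qp_eq sum_distrib_right by (rule sum.swap)

lemma eEid_eq: "eEid u k = Gproj (u + k) * e k"
proof -
  define K where "K = nat (k mod int n)"
  have K: "K < n" "int K = k mod int n"
    using n_pos by (simp_all add: K_def nat_less_iff)
  have "eEid u k = (\<Sum>j<n. Gproj (u + int j) * (e k * e (int j)))"
    unfolding eEid_def Eid_eq_sum_Gproj sum_distrib_left
    by (simp only: mult.assoc[symmetric] e_Gproj)
  also have "\<dots> = (\<Sum>j<n. if j = K then Gproj (u + k) * e k else 0)"
  proof (rule sum.cong)
    fix j
    assume "j \<in> {..<n}"
    then have "(k mod int n = int j mod int n) = (j = K)" using K by auto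
    moreover have "Gproj (u + int j) = Gproj (u + k)" if "k mod int n = int j mod int n"
      using that by (intro Gproj_cong mod_d_if_mod_n) (metis mod_add_cong)
    ultimately show "Gproj (u + int j) * (e k * e (int j)) = (if j = K then Gproj (u + k) * e k else 0)"
      by (auto simp: e_mult)
  qed simp
  also have "\<dots> = Gproj (u + k) * e k"
    using K by simp
  finally show ?thesis .
qed

lemma eEid_cong:
  assumes "k mod int n = k' mod int n"
  shows "eEid u k = eEid u k'"
  unfolding eEid_def using e_congruent[OF assms] by simp

lemma e_eEid: "e k * eEid u k' = (if k mod int n = k' mod int n then eEid u k else 0)"
  unfolding eEid_def by (simp add: e_mult flip: mult.assoc)

lemma eEid_mult: "eEid u k * eEid u k' = (if k mod int n = k' mod int n then eEid u k else 0)"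
proof -
  have "eEid u k * eEid u k' = Gproj (u + k) * (e k * eEid u k')"
    by (simp only: eEid_eq[of u k] mult.assoc)
  also have "\<dots> = (if k mod int n = k' mod int n then Gproj (u + k) * eEid u k else 0)"
    by (simp add: e_eEid)
  also have "\<dots> = (if k mod int n = k' mod int n then eEid u k else 0)"
    by (simp add: eEid_eq Gproj_idem flip: mult.assoc)
  finally show ?thesis .
qed

lemma G_eEid: "G * eEid u k = emb (q powi (u + k)) * eEid u k"
  by (simp only: eEid_eq G_Gproj mult.assoc[symmetric])

lemma eEid_G: "eEid u k * G = G * eEid u k"
proof -
  have "eEid u k * G = Gproj (u + k) * G * e k"
    by (simp only: eEid_eq mult.assoc e_G)
  also have "\<dots> = G * eEid u k"
    by (simp only: Gproj_G eEid_eq mult.assoc)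
  finally show ?thesis .
qed

lemma X_eEid: "X * eEid u k = eEid u (k - 1) * X"
proof -
  have "X * eEid u k = Gproj (u + k - 1) * (X * e k)"
    by (simp add: eEid_eq X_Gproj flip: mult.assoc)
  also have "X * e k = e (k - 1) * X"
    using e_X[of "k - 1"] by simp
  finally show ?thesis by (simp add: eEid_eq mult.assoc add_diff_eq)
qed

lemma gam_eEid:
  assumes "m < d"
  shows "gam a e l m * eEid u k
    = (if k mod int n = l mod int n then eEid u (k + int m) * gam a e l m else 0)"
proof -
  have twisted: "gam a e l m * eEid u k = Gproj (u + k + int m) * (gam a e l m * e k)"
    using assms by (simp add: eEid_eq gam_Gproj flip: mult.assoc)
  show ?thesis
  proof (cases "k mod int n = l mod int n")
    case True
    have "e (k + int m) = e (l + int m)"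
      by (intro e_congruent mod_add_cong True refl)
    then have "gam a e l m = e (k + int m) * gam a e l m"
      by (simp add: e_gam_left)
    then have "gam a e l m * eEid u k = Gproj (u + (k + int m)) * (e (k + int m) * gam a e l m)"
      using True by (simp add: twisted gam_mult_e add.assoc)
    then show ?thesis
      using True by (simp add: eEid_eq mult.assoc)
  next
    case False
    then show ?thesis by (simp add: twisted gam_mult_e)
  qed
qed

lemma eEid_gam_eq_0:
  assumes "k mod int n \<noteq> l mod int n"
  shows "eEid u (k + int m) * gam a e l m = 0"
proof -
  have "(k + int m) mod int n \<noteq> (l + int m) mod int n"
  proof
    assume "(k + int m) mod int n = (l + int m) mod int n"
    then have "(k + int m - int m) mod int n = (l + int m - int m) mod int n"
      by (intro mod_diff_cong refl)
    then show False using assms by simp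
  qed
  then show ?thesis by (simp add: eEid_eq mult.assoc e_mult_gam_eq_0)
qed

lemma eEid_nonzero: "eEid u k \<noteq> 0"
proof
  assume zero: "eEid u k = 0"
  define K where "K = nat (k mod int n)"
  have K: "K < n" "k mod int n = int K mod int n"
    using n_pos by (simp_all add: K_def nat_less_iff)
  define c where "c i = inverse (of_nat n) * q powi (- (int i * (u + int K)))" for i :: nat
  have "(\<Sum>i<n. emb (c i) * G ^ i * e (int K)) = eEid u (int K)"
    by (simp add: eEid_eq Gproj_def c_def sum_distrib_right)
  also have "\<dots> = 0"
    using zero eEid_cong[OF K(2)] by simp
  finally have "c 0 = 0"
    using K(1) n_pos by (intro G_power_e_independent)
  then show False
    using n_nonzero by (simp add: c_def)
qed

lemma Eidj_eq_sum: "Eidj n d q emb G e u j = (\<Sum>v<n div d. eEid u (j + int v * int d))"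
  unfolding Eidj_def eEid_def ..

lemma int_n_eq_mult: "int n = int (n div d) * int d"
  using d_dvd_n by (simp flip: of_nat_mult)

lemma n_div_d_pos: "0 < n div d"
  using n_pos d_dvd_n d_pos by (auto elim!: dvdE)

lemma Eidj_mod: "Eidj n d q emb G e u j = Eidj n d q emb G e u (j mod int d)"
proof -
  define r where "r = j mod int d"
  define g where "g w = eEid u (r + w * int d)" for w
  have period: "g (w + int (n div d)) = g w" for w
  proof -
    have "r + (w + int (n div d)) * int d = (r + w * int d) + int n"
      using int_n_eq_mult by (simp add: algebra_simps)
    then have "(r + (w + int (n div d)) * int d) mod int n = (r + w * int d) mod int n"
      by (simp only: mod_add_self2)
    then show ?thesis unfolding g_def by (rule eEid_cong)
  qed
  have "j + int v * int d = r + (int v + j div int d) * int d" for v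
    unfolding r_def by (simp add: algebra_simps)
  then have "Eidj n d q emb G e u j = (\<Sum>v<n div d. g (int v + j div int d))"
    unfolding Eidj_eq_sum g_def by simp
  also have "\<dots> = (\<Sum>v<n div d. g (int v))"
    by (rule sum_periodic_shift) (rule period)
  also have "\<dots> = Eidj n d q emb G e u r"
    unfolding Eidj_eq_sum g_def by simp
  finally show ?thesis unfolding r_def .
qed

lemma Eidj_cong: "j mod int d = j' mod int d \<Longrightarrow> Eidj n d q emb G e u j = Eidj n d q emb G e u j'"
  by (metis Eidj_mod)

lemma Eidj_orthogonal:
  assumes "0 \<le> j" "j < int d" "0 \<le> l" "l < int d"
  shows "Eidj n d q emb G e u j * Eidj n d q emb G e u l
    = (if j = l then Eidj n d q emb G e u j else 0)"
proof -
  have "Eidj n d q emb G e u j * Eidj n d q emb G e u l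
      = (\<Sum>v<n div d. \<Sum>v'<n div d. eEid u (j + int v * int d) * eEid u (l + int v' * int d))"
    by (simp only: Eidj_eq_sum sum_product)
  also have "\<dots> = (\<Sum>v<n div d. \<Sum>v'<n div d. if j = l \<and> v = v' then eEid u (j + int v * int d) else 0)"
    by (intro sum.cong refl) (simp add: eEid_mult int_n_eq_mult add_mult_mod_eq_iff assms)
  also have "\<dots> = (if j = l then Eidj n d q emb G e u j else 0)"
    by (cases "j = l") (simp_all add: Eidj_eq_sum)
  finally show ?thesis .
qed

lemma sum_Eidj: "(\<Sum>j<d. Eidj n d q emb G e u (int j)) = Eid n d q emb G e u"
proof -
  have "(\<Sum>j<d. Eidj n d q emb G e u (int j)) = (\<Sum>v<n div d. \<Sum>j<d. eEid u (int (j + v * d)))"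
    unfolding Eidj_eq_sum by (simp add: sum.swap[of _ "{..<d}"])
  also have "\<dots> = (\<Sum>v<n div d. \<Sum>x\<in>{v * d..<v * d + d}. eEid u (int x))"
  proof (rule sum.cong)
    fix v
    have "(\<Sum>x\<in>{0 + v * d..<d + v * d}. eEid u (int x)) = (\<Sum>j\<in>{0..<d}. eEid u (int (j + v * d)))"
      by (rule sum.shift_bounds_nat_ivl)
    then show "(\<Sum>j<d. eEid u (int (j + v * d))) = (\<Sum>x\<in>{v * d..<v * d + d}. eEid u (int x))"
      by (simp add: atLeast0LessThan add.commute)
  qed simp
  also have "\<dots> = (\<Sum>x<n div d * d. eEid u (int x))"
    by (rule sum.nat_group)
  also have "\<dots> = Eid n d q emb G e u"
    using d_dvd_n by (simp add: Eid_eq_sum_Gproj eEid_eq)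
  finally show ?thesis .
qed

lemma Eidj_nonzero: "Eidj n d q emb G e u j \<noteq> 0"
proof -
  define r where "r = j mod int d"
  have r: "0 \<le> r" "r < int d"
    using d_pos by (simp_all add: r_def)
  have "e r * Eidj n d q emb G e u r = (\<Sum>v<n div d. if v = 0 then eEid u r else 0)"
    unfolding Eidj_eq_sum sum_distrib_left
    using add_mult_mod_eq_iff[OF r r, of 0 "n div d"] n_div_d_pos
    by (intro sum.cong refl) (auto simp: e_eEid int_n_eq_mult)
  also have "\<dots> = eEid u r"
    using n_div_d_pos by simp
  finally have "e r * Eidj n d q emb G e u r \<noteq> 0"
    using eEid_nonzero by simp
  then show ?thesis
    using Eidj_mod[of u j] by (auto simp: r_def)
qed

lemma Eidj_eq_iff:
  "Eidj n d q emb G e u j = Eidj n d q emb G e u j' \<longleftrightarrow> j mod int d = j' mod int d"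
proof
  assume eq: "Eidj n d q emb G e u j = Eidj n d q emb G e u j'"
  show "j mod int d = j' mod int d"
  proof (rule ccontr)
    assume ne: "j mod int d \<noteq> j' mod int d"
    let ?E = "Eidj n d q emb G e u"
    have "?E (j mod int d) = ?E (j mod int d) * ?E (j mod int d)"
      using Eidj_orthogonal[of "j mod int d" "j mod int d"] d_pos by simp
    also have "\<dots> = ?E (j mod int d) * ?E (j' mod int d)"
      using eq Eidj_mod by metis
    also have "\<dots> = 0"
      using Eidj_orthogonal[of "j mod int d" "j' mod int d"] ne d_pos by simp
    finally show False
      using Eidj_nonzero by simp
  qed
qed (rule Eidj_cong)

lemma G_Eidj: "G * Eidj n d q emb G e u j = emb (q powi (u + j)) * Eidj n d q emb G e u j"
proof -
  have period: "q powi (u + (j + int v * int d)) = q powi (u + j)" for v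
    by (rule power_int_q_cong) (simp add: add.assoc[symmetric])
  show ?thesis
    by (simp add: Eidj_eq_sum sum_distrib_left G_eEid period)
qed

lemma Eidj_G: "Eidj n d q emb G e u j * G = G * Eidj n d q emb G e u j"
  by (simp add: Eidj_eq_sum sum_distrib_left sum_distrib_right eEid_G)

lemma X_Eidj: "X * Eidj n d q emb G e u j = Eidj n d q emb G e u (j - 1) * X"
  by (simp add: Eidj_eq_sum sum_distrib_left sum_distrib_right X_eEid diff_add_eq)

lemma gam_Eidj:
  assumes "m < d"
  shows "gam a e l m * Eidj n d q emb G e u j
    = (if l mod int d = j mod int d then Eidj n d q emb G e u (j + int m) * gam a e l m else 0)"
proof -
  have "gam a e l m * Eidj n d q emb G e u j = (\<Sum>v<n div d. gam a e l m * eEid u (j + int v * int d))"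
    by (simp only: Eidj_eq_sum sum_distrib_left)
  also have "\<dots> = (if l mod int d = j mod int d
      then (\<Sum>v<n div d. eEid u (j + int m + int v * int d) * gam a e l m) else 0)"
  proof (cases "l mod int d = j mod int d")
    case True
    have "gam a e l m * eEid u (j + int v * int d) = eEid u (j + int m + int v * int d) * gam a e l m"
      for v
    proof (cases "(j + int v * int d) mod int n = l mod int n")
      case True
      then show ?thesis using assms by (simp add: gam_eEid add_ac)
    next
      case False
      then show ?thesis using assms eEid_gam_eq_0[OF False, of u m] by (simp add: gam_eEid add_ac)
    qed
    then have "(\<Sum>v<n div d. gam a e l m * eEid u (j + int v * int d))
        = (\<Sum>v<n div d. eEid u (j + int m + int v * int d) * gam a e l m)"
      by (rule sum.cong[OF refl])
    then show ?thesis unfolding if_P[OF True] .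
  next
    case False
    have "gam a e l m * eEid u (j + int v * int d) = 0" for v
    proof -
      have "(j + int v * int d) mod int n \<noteq> l mod int n"
      proof
        assume "(j + int v * int d) mod int n = l mod int n"
        then have "(j + int v * int d) mod int d = l mod int d"
          by (rule mod_d_if_mod_n)
        then show False using False by simp
      qed
      then show ?thesis using assms by (simp add: gam_eEid)
    qed
    then show ?thesis unfolding if_not_P[OF False] by simp
  qed
  also have "\<dots> = (if l mod int d = j mod int d
      then Eidj n d q emb G e u (j + int m) * gam a e l m else 0)"
    by (simp only: Eidj_eq_sum sum_distrib_right)
  finally show ?thesis .
qed

end

lemma is_DD_imp_drinfeld_double:
  fixes q :: "'k::field" and emb :: "'k \<Rightarrow> 'a::ring_1"
  assumes "0 < d" and "d dvd n" and "of_nat n \<noteq> (0::'k)" and "q ^ d = 1"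
    and "is_DD n d q emb G X e a"
  shows "drinfeld_double n d q emb G X e a"
proof -
  note rels = assms(5)[unfolded is_DD_def Let_def]
  have emb_0: "emb 0 = 0" and emb_1: "emb 1 = 1"
    using rels by blast+
  have gam_X: "\<forall>l m. m < d \<longrightarrow> gam a e l m * X =
           emb (qp d q (- int m)) * X * gam a e (l + 1) m
         - emb (qp d q (- int m) * qint q m) * gam a e (l + 1) (m - 1)
         + emb (qp d q (l + 1 - int m) * qint q m) * G * gam a e (l + 1) (m - 1)"
    using rels by blast
  have basis_independent: "\<forall>c. (\<Sum>t\<in>{0..<n} \<times> {0..<d} \<times> {0..<n} \<times> {0..<d}.
            emb (c t) * (case t of (i, j, l, m) \<Rightarrow> G ^ i * X ^ j * gam a e (int l) m)) = 0
          \<longrightarrow> (\<forall>t\<in>{0..<n} \<times> {0..<d} \<times> {0..<n} \<times> {0..<d}. c t = 0)"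
    using rels by blast
  show ?thesis
  proof unfold_locales
    show "e l * X = X * e (l + 1)" for l
      using gam_X[rule_format, of 0 l] assms(1) by (simp add: qp_def qint_def emb_0 emb_1)
    show "c i = 0" if "K < n" "(\<Sum>i<n. emb (c i) * G ^ i * e (int K)) = 0" "i < n" for c K i
      by (rule G_power_e_independent_if_basis[OF emb_0 assms(1) that(1,3) basis_independent that(2)])
  qed (insert assms(1-4) rels, blast+)
qed

theorem mainTheorem3:
  fixes n d :: nat and q :: "'k::alg_closed_field" and emb :: "'k \<Rightarrow> 'a::ring_1"
    and G X :: 'a and e a :: "int \<Rightarrow> 'a"
  assumes "d \<ge> 2" and "d dvd n" and "of_nat n \<noteq> (0::'k)"
    and "q ^ d = 1" and "\<forall>m. 0 < m \<and> m < d \<longrightarrow> q ^ m \<noteq> 1"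
    and "is_DD n d q emb G X e a"
  shows
    "(\<forall>u j l. 0 \<le> j \<and> j < int d \<and> 0 \<le> l \<and> l < int d \<longrightarrow>
        Eidj n d q emb G e u j * Eidj n d q emb G e u l
          = (if j = l then Eidj n d q emb G e u j else 0))
   \<and> (\<forall>u. (\<Sum>j<d. Eidj n d q emb G e u (int j)) = Eid n d q emb G e u)
   \<and> (\<forall>u j j'. Eidj n d q emb G e u j = Eidj n d q emb G e u j' \<longleftrightarrow> j mod int d = j' mod int d)
   \<and> (\<forall>u j. G * Eidj n d q emb G e u j = emb (qp d q (u + j)) * Eidj n d q emb G e u j
        \<and> emb (qp d q (u + j)) * Eidj n d q emb G e u j = Eidj n d q emb G e u j * G)
   \<and> (\<forall>u j. X * Eidj n d q emb G e u j = Eidj n d q emb G e u (j - 1) * X)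
   \<and> (\<forall>u j l m. m < d \<longrightarrow>
        gam a e l m * Eidj n d q emb G e u j
          = (if l mod int d = j mod int d
             then Eidj n d q emb G e u (j + int m) * gam a e l m else 0))"
proof -
  interpret drinfeld_double n d q emb G X e a
    using assms by (intro is_DD_imp_drinfeld_double) auto
  show ?thesis
    by (simp add: Eidj_orthogonal sum_Eidj Eidj_eq_iff G_Eidj Eidj_G X_Eidj gam_Eidj)
qed

end
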